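(* Let $\tilde S\subseteq\mathfrak P$ and let $\tilde O\subseteq\mathcal C_{\mathfrak P}(\tilde S)$ be a finite set. Then $\omega_{\tilde S}(\Pi(\tilde O))\ge\min_{o\in\tilde O}\omega_{\tilde S}(o)$.
   Context: $\mathfrak P$ is the group of $N$-qubit Pauli operators modulo phases; $\mathcal C_{\mathfrak P}(\tilde S)$ is the centralizer of $\tilde S$ in $\mathfrak P$; $\Pi(\tilde O)$ is the product of the elements of $\tilde O$. The weight of a Pauli operator is its number of non-identity tensor factors. For $l\in\mathcal C_{\mathfrak P}(\tilde S)$, $\omega_{\tilde S}(l)$ is the minimum weight of an operator $e\in\mathcal C_{\mathfrak P}(\tilde S)$ that anticommutes with $l$ (an undetectable error acting on $l$), with value $+\infty$ if no such $e$ exists. *)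

theory Defs
  imports Main "HOL-Library.Extended_Nat" "HOL-Library.Function_Algebras"
begin

text \<open>Single-qubit Pauli operators modulo phases.\<close>

datatype pauli = PI | PX | PY | PZ

instantiation pauli :: comm_monoid_mult
begin

fun times_pauli :: "pauli \<Rightarrow> pauli \<Rightarrow> pauli" where
  "times_pauli PI q = q"
| "times_pauli p PI = p"
| "times_pauli PX PX = PI" | "times_pauli PX PY = PZ" | "times_pauli PX PZ = PY"
| "times_pauli PY PX = PZ" | "times_pauli PY PY = PI" | "times_pauli PY PZ = PX"
| "times_pauli PZ PX = PY" | "times_pauli PZ PY = PX" | "times_pauli PZ PZ = PI"

definition one_pauli :: pauli where "one_pauli = PI"

instance
proof
  fix a b c :: pauli
  show "a * b * c = a * (b * c)" by (cases a; cases b; cases c) auto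
  show "a * b = b * a" by (cases a; cases b) auto
  show "1 * a = a" by (simp add: one_pauli_def)
qed
end

text \<open>N-qubit Pauli operators modulo phases: functions from qubit indices to
single-qubit Paulis that are the identity outside qubits 0..N-1. Multiplication
(modulo phases) is pointwise (Function_Algebras instance on functions).\<close>

definition pauli_group :: "nat \<Rightarrow> (nat \<Rightarrow> pauli) set" where
  "pauli_group N = {p. \<forall>i\<ge>N. p i = PI}"

definition anticommutes :: "(nat \<Rightarrow> pauli) \<Rightarrow> (nat \<Rightarrow> pauli) \<Rightarrow> bool" where
  "anticommutes p q \<longleftrightarrow> odd (card {i. p i \<noteq> PI \<and> q i \<noteq> PI \<and> p i \<noteq> q i})"

definition commutes :: "(nat \<Rightarrow> pauli) \<Rightarrow> (nat \<Rightarrow> pauli) \<Rightarrow> bool" where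
  "commutes p q \<longleftrightarrow> \<not> anticommutes p q"

definition centralizer :: "nat \<Rightarrow> (nat \<Rightarrow> pauli) set \<Rightarrow> (nat \<Rightarrow> pauli) set" where
  "centralizer N S = {p \<in> pauli_group N. \<forall>s\<in>S. commutes p s}"

definition weight :: "(nat \<Rightarrow> pauli) \<Rightarrow> nat" where
  "weight p = card {i. p i \<noteq> PI}"

text \<open>omega: minimum weight of an element of the centralizer anticommuting with l;
infinity if none exists (Inf of the empty set in enat).\<close>
definition omega :: "nat \<Rightarrow> (nat \<Rightarrow> pauli) set \<Rightarrow> (nat \<Rightarrow> pauli) \<Rightarrow> enat" where
  "omega N S l = (INF e \<in> {e \<in> centralizer N S. anticommutes e l}. enat (weight e))"

end

theory Submission
  imports Defs
begin

text \<open>For a fixed operator e of finite support, anticommutation with e is a homomorphism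
from the Pauli group to \<open>\<int>/2\<close>: qubitwise, anticommutation with a fixed single-qubit
Pauli is additive mod 2 in the other factor, and the parity of a sum of qubit
contributions is the sum of the parities. Hence if e anticommutes with a product of
observables, it anticommutes with one of the factors, and every undetectable error
acting on the product acts on some factor.\<close>

definition pauli_anticommutes :: "pauli \<Rightarrow> pauli \<Rightarrow> bool" where
  "pauli_anticommutes a b \<longleftrightarrow> a \<noteq> PI \<and> b \<noteq> PI \<and> a \<noteq> b"

lemma pauli_anticommutes_mult:
  "pauli_anticommutes a (b * c) \<longleftrightarrow> pauli_anticommutes a b \<noteq> pauli_anticommutes a c"
  unfolding pauli_anticommutes_def
  by (cases a; cases b; cases c; simp only: times_pauli.simps pauli.distinct simp_thms)

lemma even_card_sym_diff_plus_card:
  assumes "finite A" "finite B"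
  shows "even (card ((A - B) \<union> (B - A)) + card A + card B)"
proof -
  have "card ((A - B) \<union> (B - A)) = card (A - B) + card (B - A)"
    using assms by (intro card_Un_disjoint) auto
  moreover have "card (A - B) = card A - card (A \<inter> B)" "card (B - A) = card B - card (A \<inter> B)"
    using assms by (simp_all add: card_Diff_subset_Int Int_commute)
  moreover have "card (A \<inter> B) \<le> card A" "card (A \<inter> B) \<le> card B"
    using assms by (simp_all add: card_mono)
  ultimately have "card ((A - B) \<union> (B - A)) + card A + card B
      = 2 * (card A + card B - card (A \<inter> B))"
    by linarith
  then show ?thesis by simp
qed

lemma anticommutes_mult_right:
  assumes "finite {i. e i \<noteq> PI}"
  shows "anticommutes e (p * q) \<longleftrightarrow> anticommutes e p \<noteq> anticommutes e q"
proof -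
  let ?D = "{i. e i \<noteq> PI}"
  define clash where "clash r = {i \<in> ?D. pauli_anticommutes (e i) (r i)}" for r
  have clash_eq: "{i. e i \<noteq> PI \<and> r i \<noteq> PI \<and> e i \<noteq> r i} = clash r" for r
    by (auto simp: clash_def pauli_anticommutes_def)
  have "clash (p * q) = (clash p - clash q) \<union> (clash q - clash p)"
    by (auto simp: clash_def times_fun_def pauli_anticommutes_mult)
  moreover have "even (card ((clash p - clash q) \<union> (clash q - clash p)) + card (clash p) + card (clash q))"
    using assms by (intro even_card_sym_diff_plus_card) (simp_all add: clash_def)
  ultimately have "odd (card (clash (p * q))) \<longleftrightarrow> odd (card (clash p)) \<noteq> odd (card (clash q))"
    by (metis even_add)
  then show ?thesis
    unfolding anticommutes_def clash_eq .
qed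

lemma not_anticommutes_one: "\<not> anticommutes e 1"
  by (simp add: anticommutes_def one_fun_def one_pauli_def)

lemma anticommutes_prod_right_imp_factor:
  assumes "finite {i. e i \<noteq> PI}" "finite F" "anticommutes e (\<Prod>F)"
  shows "\<exists>f\<in>F. anticommutes e f"
  using assms(2,3)
proof (induction F rule: finite_induct)
  case empty
  then show ?case using not_anticommutes_one by (metis prod.empty)
next
  case (insert x F)
  from insert.prems have "anticommutes e (x * \<Prod>F)"
    unfolding prod.insert[OF insert.hyps(1,2)] .
  then show ?case using insert.IH anticommutes_mult_right[OF assms(1)] by blast
qed

lemma finite_support_pauli_group:
  assumes "p \<in> pauli_group N"
  shows "finite {i. p i \<noteq> PI}"
proof (rule finite_subset)
  show "{i. p i \<noteq> PI} \<subseteq> {..<N}"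
    using assms by (auto simp: pauli_group_def not_less[symmetric])
qed simp

theorem lemma2:
  fixes N :: nat and S Obs :: "(nat \<Rightarrow> pauli) set"
  assumes "S \<subseteq> pauli_group N"
    and "finite Obs"
    and "Obs \<subseteq> centralizer N S"
  shows "omega N S (\<Prod>Obs) \<ge> (INF o' \<in> Obs. omega N S o')"
  unfolding omega_def[of N S "\<Prod>Obs"]
proof (rule INF_greatest)
  fix e assume e: "e \<in> {e \<in> centralizer N S. anticommutes e (\<Prod>Obs)}"
  then have "finite {i. e i \<noteq> PI}"
    by (intro finite_support_pauli_group[of e N]) (simp add: centralizer_def)
  then obtain o' where o': "o' \<in> Obs" "anticommutes e o'"
    using anticommutes_prod_right_imp_factor assms(2) e by blast
  have "(INF o' \<in> Obs. omega N S o') \<le> omega N S o'"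
    using o' by (intro INF_lower)
  also have "\<dots> \<le> enat (weight e)"
    unfolding omega_def using e o' by (intro INF_lower) auto
  finally show "(INF o' \<in> Obs. omega N S o') \<le> enat (weight e)" .
qed

end
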